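(* Let $q$ be a prime power, $t$ an integer with $2\le t<q$, and $d$ a non-negative integer. Then there exists an $\left(\left\lfloor \frac{q-d}{t-1}\right\rfloor;d\right)$-CFF$(q^2+q,\,q^t)$.
   Context: A set system $(X,\mathcal F)$ (a finite point set $X$ and a set $\mathcal F$ of subsets called blocks) is an $(r;d)$-CFF$(N,T)$ if $|X|=N$, $|\mathcal F|=T$, and for any block $B_0\in\mathcal F$ and any $r$ other blocks $A_1,\dots,A_r\in\mathcal F\setminus\{B_0\}$ we have $\left|B_0\setminus\bigcup_{j=1}^r A_j\right|>d$. *)

theory Defs
  imports Complex_Main "HOL-Number_Theory.Prime_Powers"
begin

definition cff :: "nat \<Rightarrow> nat \<Rightarrow> 'a set \<Rightarrow> 'a set set \<Rightarrow> nat \<Rightarrow> nat \<Rightarrow> bool" where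
  "cff r d X F N T \<longleftrightarrow>
     finite X \<and> (\<forall>B\<in>F. B \<subseteq> X) \<and> card X = N \<and> card F = T \<and>
     (\<forall>B0\<in>F. \<forall>A :: nat \<Rightarrow> 'a set. (\<forall>j<r. A j \<in> F - {B0}) \<longrightarrow>
        card (B0 - (\<Union>j<r. A j)) > d)"

end

theory Submission
  imports Defs "HOL-Algebra.Algebraic_Closure" "HOL-Number_Theory.Residues"
begin

text \<open>Over a field with \<open>q\<close> elements, the polynomials of degree less than \<open>t\<close>, read at the
  \<open>q\<close> field elements and at the point at infinity (where one reads the coefficient of
  \<open>x\<^sup>t\<^sup>-\<^sup>1\<close>), form a code of length \<open>q + 1\<close> with \<open>q\<^sup>t\<close> words, any two of which agree
  in at most \<open>t - 1\<close> positions. The graphs of the codewords are \<open>q\<^sup>t\<close> blocks of size \<open>q + 1\<close> in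
  a set of \<open>(q + 1) q\<close> points, any two of which meet in at most \<open>t - 1\<close> points; so \<open>r\<close> other
  blocks cover at most \<open>r (t - 1) \<le> q - d\<close> points of a block and leave more than \<open>d\<close>.

  The field with \<open>q = p\<^sup>n\<close> elements is the set of roots of \<open>X\<^sup>q - X\<close> in an algebraic closure
  of \<open>\<int>/p\<close>: the roots form a subfield because \<open>(x + y)\<^sup>q = x\<^sup>q + y\<^sup>q\<close> in characteristic
  \<open>p\<close>, and there are \<open>q\<close> of them because \<open>X\<^sup>q - X\<close> has no repeated root.\<close>

no_notation var (\<open>X\<index>\<close>)

section \<open>The Frobenius map in prime characteristic\<close>

lemma (in ring) finsum_pascal:
  assumes m: "\<And>k. m k \<in> carrier R"
  shows "(\<Oplus>k\<in>{..n}. [(n choose k)] \<cdot> m (Suc k)) \<oplus> (\<Oplus>k\<in>{..n}. [(n choose k)] \<cdot> m k)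
    = (\<Oplus>k\<in>{..Suc n}. [(Suc n choose k)] \<cdot> m k)"
proof -
  have "(\<Oplus>k\<in>{..n}. [(n choose k)] \<cdot> m (Suc k))
      = (\<Oplus>k\<in>{..Suc n}. [(if k = 0 then 0 else n choose (k - 1))] \<cdot> m k)"
    using m by (subst finsum_Suc2) auto
  moreover have "(\<Oplus>k\<in>{..n}. [(n choose k)] \<cdot> m k) = (\<Oplus>k\<in>{..Suc n}. [(n choose k)] \<cdot> m k)"
    using m by (subst finsum_Suc) (auto simp: binomial_eq_0)
  moreover have "(\<Oplus>k\<in>{..Suc n}. [(if k = 0 then 0 else n choose (k - 1))] \<cdot> m k)
        \<oplus> (\<Oplus>k\<in>{..Suc n}. [(n choose k)] \<cdot> m k)
      = (\<Oplus>k\<in>{..Suc n}. [(if k = 0 then 0 else n choose (k - 1))] \<cdot> m k \<oplus> [(n choose k)] \<cdot> m k)"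
    using m by (subst finsum_addf) auto
  moreover have "\<dots> = (\<Oplus>k\<in>{..Suc n}. [(Suc n choose k)] \<cdot> m k)"
  proof (intro finsum_cong')
    fix k
    have "(if k = 0 then 0 else n choose (k - 1)) + (n choose k) = Suc n choose k"
      by (cases k) auto
    then show "[(if k = 0 then 0 else n choose (k - 1))] \<cdot> m k \<oplus> [(n choose k)] \<cdot> m k
        = [(Suc n choose k)] \<cdot> m k"
      using m by (metis add.nat_pow_mult)
  qed (use m in auto)
  ultimately show ?thesis by simp
qed

lemma (in cring) binomial_expansion:
  assumes x: "x \<in> carrier R" and y: "y \<in> carrier R"
  shows "(x \<oplus> y) [^] (n::nat) = (\<Oplus>k\<in>{..n}. [(n choose k)] \<cdot> (x [^] k \<otimes> y [^] (n - k)))"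
proof (induction n)
  case 0
  then show ?case using x y by simp
next
  case (Suc n)
  define m where "m k = x [^] k \<otimes> y [^] (Suc n - k)" for k
  have m_closed: "m k \<in> carrier R" for k using x y by (simp add: m_def)
  let ?S = "\<Oplus>k\<in>{..n}. [(n choose k)] \<cdot> (x [^] k \<otimes> y [^] (n - k))"
  have "?S \<otimes> x = (\<Oplus>k\<in>{..n}. [(n choose k)] \<cdot> (x [^] k \<otimes> y [^] (n - k)) \<otimes> x)"
    using x y by (intro finsum_ldistr) auto
  also have "\<dots> = (\<Oplus>k\<in>{..n}. [(n choose k)] \<cdot> m (Suc k))"
  proof (intro finsum_cong')
    fix k
    have "m (Suc k) = (x [^] k \<otimes> y [^] (n - k)) \<otimes> x"
      using x y by (simp add: m_def) (metis m_assoc m_comm nat_pow_closed)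
    then show "[(n choose k)] \<cdot> (x [^] k \<otimes> y [^] (n - k)) \<otimes> x = [(n choose k)] \<cdot> m (Suc k)"
      using x y by (simp add: add_pow_ldistr)
  qed (use m_closed in auto)
  moreover have "?S \<otimes> y = (\<Oplus>k\<in>{..n}. [(n choose k)] \<cdot> (x [^] k \<otimes> y [^] (n - k)) \<otimes> y)"
    using x y by (intro finsum_ldistr) auto
  moreover have "\<dots> = (\<Oplus>k\<in>{..n}. [(n choose k)] \<cdot> m k)"
  proof (intro finsum_cong')
    fix k assume "k \<in> {..n}"
    then have "m k = x [^] k \<otimes> (y [^] (n - k) \<otimes> y)"
      using x y by (simp add: m_def Suc_diff_le)
    then show "[(n choose k)] \<cdot> (x [^] k \<otimes> y [^] (n - k)) \<otimes> y = [(n choose k)] \<cdot> m k"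
      using x y by (simp add: add_pow_ldistr m_assoc)
  qed (use m_closed in auto)
  ultimately have "?S \<otimes> (x \<oplus> y) = (\<Oplus>k\<in>{..Suc n}. [(Suc n choose k)] \<cdot> m k)"
    using x y finsum_pascal[OF m_closed] by (simp add: r_distr)
  then show ?case using Suc by (simp add: m_def)
qed

lemma (in ring) add_pow_eq_zero_if_char_dvd:
  assumes "[(p::nat)] \<cdot> \<one> = \<zero>" and "z \<in> carrier R" and "p dvd m"
  shows "[m] \<cdot> z = \<zero>"
proof -
  obtain c where m: "m = p * c" using assms(3) by blast
  have "[p] \<cdot> z = \<zero>"
    using assms(1,2) add_pow_ldistr[of \<one> z p] by simp
  then have "[c] \<cdot> ([p] \<cdot> z) = \<zero>" by simp
  then show ?thesis using assms(2) by (simp add: m add.nat_pow_pow mult.commute)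
qed

lemma (in cring) freshmans_dream:
  assumes p: "Factorial_Ring.prime (p::nat)" and char: "[p] \<cdot> \<one> = \<zero>"
    and x: "x \<in> carrier R" and y: "y \<in> carrier R"
  shows "(x \<oplus> y) [^] p = x [^] p \<oplus> y [^] p"
proof -
  have "(x \<oplus> y) [^] p = (\<Oplus>k\<in>{..p}. [(p choose k)] \<cdot> (x [^] k \<otimes> y [^] (p - k)))"
    using binomial_expansion[OF x y] .
  also have "\<dots> = (\<Oplus>k\<in>{..p}. (if k = 0 then y [^] p else \<zero>) \<oplus> (if k = p then x [^] p else \<zero>))"
  proof (intro finsum_cong')
    fix k assume k: "k \<in> {..p}"
    show "[(p choose k)] \<cdot> (x [^] k \<otimes> y [^] (p - k))
        = (if k = 0 then y [^] p else \<zero>) \<oplus> (if k = p then x [^] p else \<zero>)"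
    proof (cases "k = 0 \<or> k = p")
      case True
      then show ?thesis using x y p by auto
    next
      case False
      then have "p dvd (p choose k)" using k p by (intro dvd_choose_prime) auto
      then show ?thesis using False x y add_pow_eq_zero_if_char_dvd[OF char] by simp
    qed
  qed (use x y in auto)
  also have "\<dots> = (\<Oplus>k\<in>{..p}. (if k = 0 then y [^] p else \<zero>))
      \<oplus> (\<Oplus>k\<in>{..p}. (if k = p then x [^] p else \<zero>))"
    using x y by (subst finsum_addf) auto
  also have "\<dots> = y [^] p \<oplus> x [^] p"
    using add.finprod_singleton_swap[of 0 "{..p}" "\<lambda>_. y [^] p"]
      add.finprod_singleton_swap[of p "{..p}" "\<lambda>_. x [^] p"] x y by simp
  finally show ?thesis using x y by (simp add: a_comm)
qed

lemma (in cring) freshmans_dream':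
  assumes "Factorial_Ring.prime (p::nat)" and "[p] \<cdot> \<one> = \<zero>"
    and x: "x \<in> carrier R" and y: "y \<in> carrier R"
  shows "(x \<oplus> y) [^] (p ^ n) = x [^] (p ^ n) \<oplus> y [^] (p ^ n)"
proof (induction n)
  case 0
  then show ?case using x y by simp
next
  case (Suc n)
  have "(x \<oplus> y) [^] (p ^ Suc n) = ((x \<oplus> y) [^] (p ^ n)) [^] p"
    using x y by (simp add: nat_pow_pow mult.commute)
  also have "\<dots> = (x [^] (p ^ n)) [^] p \<oplus> (y [^] (p ^ n)) [^] p"
    using Suc freshmans_dream[OF assms(1,2)] x y by simp
  also have "\<dots> = x [^] (p ^ Suc n) \<oplus> y [^] (p ^ Suc n)"
    using x y by (simp add: nat_pow_pow mult.commute)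
  finally show ?case .
qed

lemma (in cring) freshmans_dream_minus:
  assumes p: "Factorial_Ring.prime (p::nat)" and char: "[p] \<cdot> \<one> = \<zero>" and x: "x \<in> carrier R"
  shows "(\<ominus> x) [^] (p ^ n) = \<ominus> (x [^] (p ^ n))"
proof -
  have "p ^ n > 0" using p by (simp add: prime_gt_0_nat)
  then have "\<zero> = (x \<oplus> \<ominus> x) [^] (p ^ n)"
    using x by (simp add: r_neg nat_pow_zero)
  also have "\<dots> = x [^] (p ^ n) \<oplus> (\<ominus> x) [^] (p ^ n)"
    using freshmans_dream'[OF p char] x by simp
  finally have "(\<ominus> x) [^] (p ^ n) \<oplus> x [^] (p ^ n) = \<zero>"
    using x by (simp add: a_comm)
  then show ?thesis
    using x by (metis minus_equality nat_pow_closed a_inv_closed)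
qed

lemma ring_hom_char:
  assumes h: "h \<in> ring_hom A B" and "ring A" and "ring B"
    and char: "[(p::nat)] \<cdot>\<^bsub>A\<^esub> \<one>\<^bsub>A\<^esub> = \<zero>\<^bsub>A\<^esub>"
  shows "[p] \<cdot>\<^bsub>B\<^esub> \<one>\<^bsub>B\<^esub> = \<zero>\<^bsub>B\<^esub>"
proof -
  interpret A: ring A by fact
  interpret B: ring B by fact
  have "h ([n] \<cdot>\<^bsub>A\<^esub> \<one>\<^bsub>A\<^esub>) = [n] \<cdot>\<^bsub>B\<^esub> \<one>\<^bsub>B\<^esub>" for n :: nat
  proof (induction n)
    case 0
    then show ?case using ring_hom_zero[OF h A.ring_axioms B.ring_axioms] by simp
  next
    case (Suc n)
    then show ?case using h by (simp add: ring_hom_add ring_hom_one)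
  qed
  then show ?thesis
    using char ring_hom_zero[OF h A.ring_axioms B.ring_axioms] by metis
qed

lemma residue_ring_char: "[(m::nat)] \<cdot>\<^bsub>residue_ring (int m)\<^esub> \<one>\<^bsub>residue_ring (int m)\<^esub> = \<zero>\<^bsub>residue_ring (int m)\<^esub>"
proof -
  have "[k] \<cdot>\<^bsub>residue_ring (int m)\<^esub> \<one>\<^bsub>residue_ring (int m)\<^esub> = int k mod int m" for k :: nat
  proof (induction k)
    case 0
    then show ?case by (simp add: residue_ring_def add_pow_def nat_pow_def)
  next
    case (Suc k)
    have "[Suc k] \<cdot>\<^bsub>residue_ring (int m)\<^esub> \<one>\<^bsub>residue_ring (int m)\<^esub>
        = [k] \<cdot>\<^bsub>residue_ring (int m)\<^esub> \<one>\<^bsub>residue_ring (int m)\<^esub> \<oplus>\<^bsub>residue_ring (int m)\<^esub> \<one>\<^bsub>residue_ring (int m)\<^esub>"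
      by (simp add: add_pow_def nat_pow_def)
    then show ?case using Suc by (simp add: residue_ring_def mod_add_left_eq add.commute[of 1])
  qed
  from this[of m] show ?thesis by (simp add: residue_ring_def)
qed

section \<open>Existence of finite fields\<close>

lemma (in field) frobenius_fixed_subfield:
  assumes p: "Factorial_Ring.prime (p::nat)" and char: "[p] \<cdot> \<one> = \<zero>"
  shows "subfield {x \<in> carrier R. x [^] (p ^ n) = x} R"
proof -
  define K where "K = {x \<in> carrier R. x [^] (p ^ n) = x}"
  have "subring K R"
  proof (rule subringI)
    show "K \<subseteq> carrier R" "\<one> \<in> K" unfolding K_def by auto
    show "\<ominus> x \<in> K" if "x \<in> K" for x
      using that freshmans_dream_minus[OF p char] unfolding K_def by auto
    show "x \<otimes> y \<in> K" if "x \<in> K" "y \<in> K" for x y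
      using that unfolding K_def by (auto simp: nat_pow_distrib)
    show "x \<oplus> y \<in> K" if "x \<in> K" "y \<in> K" for x y
      using that freshmans_dream'[OF p char] unfolding K_def by auto
  qed
  then have "subfield K R"
  proof (rule subfieldI')
    fix x assume "x \<in> K - {\<zero>}"
    then have x: "x \<in> carrier R" "x [^] (p ^ n) = x" "x \<noteq> \<zero>" unfolding K_def by auto
    then have x_inv: "inv x \<in> carrier R" "x \<otimes> inv x = \<one>" using field_Units by auto
    then have "x \<otimes> (inv x) [^] (p ^ n) = \<one>"
      using x by (metis nat_pow_distrib nat_pow_one)
    then have "inv x = (inv x) [^] (p ^ n)"
      using x x_inv by (intro comm_inv_char) auto
    then show "inv x \<in> K" unfolding K_def using x_inv by auto
  qed
  then show ?thesis unfolding K_def .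
qed

definition (in ring) frobenius_poly :: "nat \<Rightarrow> 'a list"
  where "frobenius_poly q = var R [^]\<^bsub>poly_ring R\<^esub> q \<ominus>\<^bsub>poly_ring R\<^esub> var R"

lemma (in domain) frobenius_poly_closed: "frobenius_poly q \<in> carrier (poly_ring R)"
proof -
  interpret P: domain "poly_ring R" using univ_poly_is_domain[OF carrier_is_subring] .
  show ?thesis
    unfolding frobenius_poly_def using var_closed(1)[OF carrier_is_subring] by simp
qed

lemma (in domain) eval_frobenius_poly:
  assumes "x \<in> carrier R"
  shows "eval (frobenius_poly q) x = x [^] q \<ominus> x"
proof -
  interpret E: ring_hom_ring "poly_ring R" R "\<lambda>f. eval f x"
    using eval_ring_hom[OF carrier_is_subring assms] .
  show ?thesis
    using var_closed(1)[OF carrier_is_subring] eval_var[OF assms]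
    by (simp add: frobenius_poly_def a_minus_def E.hom_add E.hom_a_inv E.hom_nat_pow)
qed

lemma (in domain) degree_frobenius_poly:
  assumes "2 \<le> q"
  shows "degree (frobenius_poly q) = q"
proof -
  let ?P = "poly_ring R"
  have X: "var R \<in> carrier ?P" using var_closed(1)[OF carrier_is_subring] .
  have "var R [^]\<^bsub>?P\<^esub> q = monom \<one> q"
    using unitary_monom_eq_var_pow[OF carrier_is_subring] by simp
  moreover have "\<ominus>\<^bsub>?P\<^esub> var R = [\<ominus> \<one>, \<zero>]"
    using univ_poly_a_inv_def'[OF carrier_is_subring X] by (simp add: var_def)
  ultimately have "frobenius_poly q = poly_add (monom \<one> q) [\<ominus> \<one>, \<zero>]"
    unfolding frobenius_poly_def a_minus_def by (simp add: univ_poly_add)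
  moreover have "polynomial (carrier R) (monom \<one> q)"
    by (intro monom_is_polynomial[OF carrier_is_subring]) auto
  moreover have "polynomial (carrier R) [\<ominus> \<one>, \<zero>]"
    unfolding polynomial_def by auto
  moreover have "degree (monom \<one> q) \<noteq> degree [\<ominus> \<one>, \<zero>]"
    using assms by (simp add: monom_def)
  ultimately have "degree (frobenius_poly q) = max (degree (monom \<one> q)) (degree [\<ominus> \<one>, \<zero>])"
    by (metis poly_add_degree_eq[OF carrier_is_subring])
  then show ?thesis
    using assms by (simp add: monom_def)
qed

lemma (in domain) poly_ring_char:
  assumes "[(p::nat)] \<cdot> \<one> = \<zero>"
  shows "[p] \<cdot>\<^bsub>poly_ring R\<^esub> \<one>\<^bsub>poly_ring R\<^esub> = \<zero>\<^bsub>poly_ring R\<^esub>"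
proof -
  interpret P: domain "poly_ring R" using univ_poly_is_domain[OF carrier_is_subring] .
  interpret C: ring_hom_ring R "poly_ring R" poly_of_const
    using canonical_embedding_ring_hom[OF carrier_is_subring] by simp
  show ?thesis
    using ring_hom_char[OF C.homh ring_axioms P.ring_axioms assms] .
qed

lemma (in domain) frobenius_poly_shift:
  assumes p: "Factorial_Ring.prime (p::nat)" and char: "[p] \<cdot> \<one> = \<zero>"
    and a: "a \<in> carrier R" "a [^] (p ^ n) = a"
  defines "Y \<equiv> [\<one>, \<ominus> a]"
  shows "frobenius_poly (p ^ n) = Y [^]\<^bsub>poly_ring R\<^esub> (p ^ n) \<ominus>\<^bsub>poly_ring R\<^esub> Y"
proof -
  let ?P = "poly_ring R"
  interpret P: domain ?P using univ_poly_is_domain[OF carrier_is_subring] .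
  interpret C: ring_hom_ring R ?P poly_of_const
    using canonical_embedding_ring_hom[OF carrier_is_subring] by simp
  have X: "var R \<in> carrier ?P" using var_closed(1)[OF carrier_is_subring] .
  define c where "c = poly_of_const (\<ominus> a)"
  have c: "c \<in> carrier ?P" unfolding c_def using a by simp
  have Y: "Y = var R \<oplus>\<^bsub>?P\<^esub> c"
    using a by (cases "a = \<zero>") (simp_all add: Y_def var_def c_def poly_of_const_def univ_poly_add)
  have "c [^]\<^bsub>?P\<^esub> (p ^ n) = poly_of_const ((\<ominus> a) [^] (p ^ n))"
    unfolding c_def by (metis C.hom_nat_pow a_inv_closed a(1))
  then have "c [^]\<^bsub>?P\<^esub> (p ^ n) = c"
    using freshmans_dream_minus[OF p char a(1)] a(2) unfolding c_def by simp
  then have Y_pow: "Y [^]\<^bsub>?P\<^esub> (p ^ n) = var R [^]\<^bsub>?P\<^esub> (p ^ n) \<oplus>\<^bsub>?P\<^esub> c"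
    unfolding Y using P.freshmans_dream'[OF p poly_ring_char[OF char] X c] by simp
  have shift: "U \<ominus>\<^bsub>?P\<^esub> V = (U \<oplus>\<^bsub>?P\<^esub> W) \<ominus>\<^bsub>?P\<^esub> (V \<oplus>\<^bsub>?P\<^esub> W)"
    if "U \<in> carrier ?P" "V \<in> carrier ?P" "W \<in> carrier ?P" for U V W
    using that by algebra
  show ?thesis
    unfolding frobenius_poly_def Y_pow unfolding Y by (rule shift) (use X c in auto)
qed

lemma (in domain) pow_minus_self_eq_sq_mult:
  assumes y: "y \<in> carrier R" "y \<noteq> \<zero>" and g: "g \<in> carrier R" and "2 \<le> (q::nat)"
    and "y [^] q \<ominus> y = y [^] (2::nat) \<otimes> g"
  shows "y [^] (q - 1) \<ominus> \<one> = y \<otimes> g"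
proof -
  have "Suc (q - 1) = q" using \<open>2 \<le> q\<close> by simp
  then have "y [^] q \<ominus> y = y \<otimes> (y [^] (q - 1) \<ominus> \<one>)"
    using nat_pow_Suc2[OF y(1), of "q - 1"] y(1) by (simp add: r_distr r_minus minus_eq)
  moreover have "y [^] (2::nat) \<otimes> g = y \<otimes> (y \<otimes> g)"
    using y(1) g by (simp add: numeral_2_eq_2 m_assoc)
  ultimately show ?thesis
    using m_lcancel[OF y(2,1)] y(1) g assms(5) by simp
qed

lemma (in domain) alg_mult_frobenius_poly:
  assumes p: "Factorial_Ring.prime (p::nat)" and char: "[p] \<cdot> \<one> = \<zero>" and "n > 0"
  shows "alg_mult (frobenius_poly (p ^ n)) a \<le> 1"
proof (rule ccontr)
  let ?P = "poly_ring R" and ?q = "p ^ n" and ?f = "frobenius_poly (p ^ n)"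
  interpret P: domain ?P using univ_poly_is_domain[OF carrier_is_subring] .
  have q: "2 \<le> ?q" using self_le_power[of p n] prime_ge_2_nat[OF p] \<open>n > 0\<close> by simp
  assume "\<not> alg_mult ?f a \<le> 1"
  then have mult: "2 \<le> alg_mult ?f a" by simp
  then have a: "a \<in> carrier R" unfolding alg_mult_def by (auto split: if_splits)
  have "is_root ?f a"
    using alg_mult_gt_zero_iff_is_root[OF frobenius_poly_closed[of ?q], of a] mult by simp
  then have "a [^] ?q = a"
    using eval_frobenius_poly[OF a] a by (simp add: is_root_def r_right_minus_eq)
  interpret E: ring_hom_ring ?P R "\<lambda>f. eval f a"
    using eval_ring_hom[OF carrier_is_subring a] .
  define Y where "Y = [\<one>, \<ominus> a]"
  have Y: "Y \<in> carrier ?P" "Y \<noteq> \<zero>\<^bsub>?P\<^esub>"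
    unfolding Y_def univ_poly_carrier[symmetric] polynomial_def using a by (auto simp: univ_poly_zero)
  obtain g where g: "g \<in> carrier ?P" and "?f = Y [^]\<^bsub>?P\<^esub> (2::nat) \<otimes>\<^bsub>?P\<^esub> g"
    using le_alg_mult_imp_pdivides[OF a frobenius_poly_closed mult]
    unfolding pdivides_def factor_def Y_def by auto
  moreover have "?f = Y [^]\<^bsub>?P\<^esub> ?q \<ominus>\<^bsub>?P\<^esub> Y"
    unfolding Y_def using frobenius_poly_shift[OF p char a \<open>a [^] ?q = a\<close>] .
  \<comment> \<open>So \<open>Y\<close> divides \<open>Y [^] (q - 1) \<ominus> \<one>\<close>, whose value at the root \<open>a\<close> of \<open>Y\<close> is \<open>\<ominus> \<one>\<close>.\<close>
  ultimately have "Y [^]\<^bsub>?P\<^esub> (?q - 1) \<ominus>\<^bsub>?P\<^esub> \<one>\<^bsub>?P\<^esub> = Y \<otimes>\<^bsub>?P\<^esub> g"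
    using P.pow_minus_self_eq_sq_mult[OF Y g q] by simp
  then have "eval (Y [^]\<^bsub>?P\<^esub> (?q - 1) \<ominus>\<^bsub>?P\<^esub> \<one>\<^bsub>?P\<^esub>) a = eval (Y \<otimes>\<^bsub>?P\<^esub> g) a"
    by simp
  moreover have "eval Y a = \<zero>" unfolding Y_def using a by (simp add: r_neg)
  ultimately have "\<ominus> \<one> = \<zero>"
    using Y(1) g q by (simp add: a_minus_def E.hom_add E.hom_a_inv E.hom_nat_pow E.hom_mult nat_pow_zero)
  then show False by (metis minus_minus minus_zero one_closed zero_not_one)
qed

lemma (in algebraically_closed) card_frobenius_fixed:
  assumes p: "Factorial_Ring.prime (p::nat)" and char: "[p] \<cdot> \<one> = \<zero>" and "n > 0"
  shows "card {x \<in> carrier L. x [^] (p ^ n) = x} = p ^ n"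
proof -
  let ?f = "frobenius_poly (p ^ n)"
  have q: "2 \<le> p ^ n" using self_le_power[of p n] prime_ge_2_nat[OF p] \<open>n > 0\<close> by simp
  have f: "?f \<in> carrier (poly_ring L)" by (rule frobenius_poly_closed)
  have "degree ?f \<noteq> 0" using degree_frobenius_poly[OF q] q by linarith
  then have "?f \<noteq> []" by auto
  then have roots: "set_mset (roots ?f) = {x \<in> carrier L. x [^] (p ^ n) = x}"
    using roots_mem_iff_is_root[OF f] eval_frobenius_poly
    by (auto simp: is_root_def r_right_minus_eq)
  have "count (roots ?f) x = 1" if "x \<in># roots ?f" for x
    using that alg_mult_frobenius_poly[OF p char \<open>n > 0\<close>, of x] alg_mult_eq_count_roots[OF f]
    by (metis count_greater_zero_iff le_antisym Suc_leI One_nat_def)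
  then have "size (roots ?f) = card (set_mset (roots ?f))"
    by (simp add: size_multiset_overloaded_eq)
  moreover have "size (roots ?f) = p ^ n"
    using roots_over_carrier[OF f] degree_frobenius_poly[OF q] unfolding splitted_def by simp
  ultimately show ?thesis using roots by simp
qed

lemma finite_field_exists:
  assumes p: "Factorial_Ring.prime p" and "n > 0"
  shows "\<exists>F :: ((int list \<times> nat) multiset \<Rightarrow> int) ring. field F \<and> card (carrier F) = p ^ n"
proof -
  interpret R: field "residue_ring (int p)"
    using residues_prime.is_field p by (simp add: residues_prime_def)
  obtain L :: "((int list \<times> nat) multiset \<Rightarrow> int) ring"
    where L: "algebraic_closure L (R.indexed_const ` carrier (residue_ring (int p)))"
      and hom: "R.indexed_const \<in> ring_hom (residue_ring (int p)) L"
    using R.exists_closure by blast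
  interpret L: algebraic_closure L "R.indexed_const ` carrier (residue_ring (int p))" by (rule L)
  have char: "[p] \<cdot>\<^bsub>L\<^esub> \<one>\<^bsub>L\<^esub> = \<zero>\<^bsub>L\<^esub>"
    using ring_hom_char[OF hom R.ring_axioms L.ring_axioms residue_ring_char] .
  define K where "K = {x \<in> carrier L. x [^]\<^bsub>L\<^esub> (p ^ n) = x}"
  have "field (L\<lparr>carrier := K\<rparr>)"
    using L.subfield_iff(2)[OF L.frobenius_fixed_subfield[OF p char]] unfolding K_def .
  moreover have "card (carrier (L\<lparr>carrier := K\<rparr>)) = p ^ n"
    using L.card_frobenius_fixed[OF p char \<open>n > 0\<close>] unfolding K_def by simp
  ultimately show ?thesis by blast
qed

section \<open>Extended Reed--Solomon codes\<close>

lemma (in cring) eval_map2_minus: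
  assumes "length cs = length ds" "set cs \<subseteq> carrier R" "set ds \<subseteq> carrier R" "x \<in> carrier R"
  shows "eval (map2 (\<lambda>a b. a \<ominus> b) cs ds) x = eval cs x \<ominus> eval ds x"
  using assms(1-3)
proof (induction cs ds rule: list_induct2)
  case Nil
  then show ?case by (simp add: a_minus_def)
next
  case (Cons a cs b ds)
  have distrib: "(u \<ominus> v) \<otimes> y \<oplus> (e1 \<ominus> e2) = (u \<otimes> y \<oplus> e1) \<ominus> (v \<otimes> y \<oplus> e2)"
    if "u \<in> carrier R" "v \<in> carrier R" "y \<in> carrier R" "e1 \<in> carrier R" "e2 \<in> carrier R"
    for u v y e1 e2
    using that by algebra
  have "eval (map2 (\<lambda>a b. a \<ominus> b) (a # cs) (b # ds)) x
      = (a \<ominus> b) \<otimes> x [^] length cs \<oplus> (eval cs x \<ominus> eval ds x)"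
    using Cons by simp
  also have "\<dots> = (a \<otimes> x [^] length cs \<oplus> eval cs x) \<ominus> (b \<otimes> x [^] length ds \<oplus> eval ds x)"
    using Cons assms(4) by (simp add: distrib eval_in_carrier)
  finally show ?case by simp
qed

lemma (in ring) normalize_map2_minus_eq_Nil:
  assumes "length cs = length ds" "set cs \<subseteq> carrier R" "set ds \<subseteq> carrier R"
    and "normalize (map2 (\<lambda>a b. a \<ominus> b) cs ds) = []"
  shows "cs = ds"
  using assms
proof (induction cs ds rule: list_induct2)
  case Nil
  then show ?case by simp
next
  case (Cons a cs b ds)
  then have "a \<ominus> b = \<zero>" by (auto split: if_splits)
  then show ?case using Cons by (simp add: r_right_minus_eq)
qed

lemma (in field) card_eval_agree:
  assumes len: "length cs = length ds" and cs: "set cs \<subseteq> carrier R" and ds: "set ds \<subseteq> carrier R"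
    and "cs \<noteq> ds"
  shows "card {x \<in> carrier R. eval cs x = eval ds x} + (if lead_coeff cs = lead_coeff ds then 1 else 0)
    \<le> length cs - 1"
proof -
  define D where "D = map2 (\<lambda>a b. a \<ominus> b) cs ds"
  have D: "set D \<subseteq> carrier R"
    unfolding D_def using len cs ds by (induction cs ds rule: list_induct2) auto
  define z where "z = normalize D"
  have z: "z \<in> carrier (poly_ring R)"
    unfolding z_def using normalize_gives_polynomial[OF D] univ_poly_carrier by blast
  have "z \<noteq> []"
    unfolding z_def D_def using normalize_map2_minus_eq_Nil[OF len cs ds] \<open>cs \<noteq> ds\<close> by blast
  have eval_z: "eval z x = eval cs x \<ominus> eval ds x" if "x \<in> carrier R" for x
    unfolding z_def D_def using eval_normalize[OF D that] eval_map2_minus[OF len cs ds that]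
    by (simp add: D_def)
  have "{x \<in> carrier R. eval cs x = eval ds x} = set_mset (roots z)"
    using roots_mem_iff_is_root[OF z] eval_z \<open>z \<noteq> []\<close>
      eval_in_carrier[OF cs] eval_in_carrier[OF ds]
    by (auto simp: is_root_def r_right_minus_eq)
  then have "card {x \<in> carrier R. eval cs x = eval ds x} \<le> degree z"
    using size_mset_mono[OF mset_set_set_mset_msubset[of "roots z"]] size_roots_le_degree[OF z]
    by simp
  moreover have "length z + (if lead_coeff cs = lead_coeff ds then 1 else 0) \<le> length cs"
  proof (cases "lead_coeff cs = lead_coeff ds")
    case True
    obtain a cs' b ds' where "cs = a # cs'" "ds = b # ds'"
      using len \<open>cs \<noteq> ds\<close> by (cases cs; cases ds) auto
    with True cs have "z = normalize (map2 (\<lambda>a b. a \<ominus> b) cs' ds')"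
      by (simp add: z_def D_def)
    then have "length z \<le> length cs'"
      using normalize_length_le len \<open>cs = a # cs'\<close> \<open>ds = b # ds'\<close> by (metis length_map
          length_zip min.idem length_Cons Suc_inject)
    then show ?thesis using True \<open>cs = a # cs'\<close> by simp
  next
    case False
    then show ?thesis using normalize_length_le[of D] len by (simp add: z_def D_def)
  qed
  moreover have "1 \<le> length z" using \<open>z \<noteq> []\<close> by (cases z) auto
  ultimately show ?thesis by (simp split: if_splits)
qed

text \<open>Position \<open>None\<close> is the point at infinity. Coefficient lists have a fixed length and
  are not normalized, so the leading coefficient read there may be \<open>\<zero>\<close>.\<close>

definition (in ring) reed_solomon_word :: "'a list \<Rightarrow> 'a option \<Rightarrow> 'a"
  where "reed_solomon_word cs i = (case i of None \<Rightarrow> lead_coeff cs | Some x \<Rightarrow> eval cs x)"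

lemma (in field) card_reed_solomon_agree:
  assumes "length cs = length ds" "set cs \<subseteq> carrier R" "set ds \<subseteq> carrier R" "cs \<noteq> ds"
  shows "card {i \<in> insert None (Some ` carrier R). reed_solomon_word cs i = reed_solomon_word ds i}
    \<le> length cs - 1"
proof -
  let ?A = "{x \<in> carrier R. eval cs x = eval ds x}"
  have "{i \<in> insert None (Some ` carrier R). reed_solomon_word cs i = reed_solomon_word ds i}
      = Some ` ?A \<union> (if lead_coeff cs = lead_coeff ds then {None} else {})"
  proof (intro equalityI subsetI)
    fix i assume "i \<in> {i \<in> insert None (Some ` carrier R). reed_solomon_word cs i = reed_solomon_word ds i}"
    then show "i \<in> Some ` ?A \<union> (if lead_coeff cs = lead_coeff ds then {None} else {})"
      by (cases i) (auto simp: reed_solomon_word_def)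
  qed (auto simp: reed_solomon_word_def split: if_splits)
  moreover have "card (Some ` ?A \<union> (if lead_coeff cs = lead_coeff ds then {None} else {}))
      \<le> card ?A + (if lead_coeff cs = lead_coeff ds then 1 else 0)"
  proof (cases "lead_coeff cs = lead_coeff ds")
    case True
    then show ?thesis
      using card_Un_le[of "Some ` ?A" "{None}"] card_image[of Some ?A] by simp
  qed (simp add: card_image)
  ultimately show ?thesis
    using card_eval_agree[OF assms] by simp
qed

section \<open>Cover-free families from set systems with small intersections\<close>

definition bounded_intersections :: "'a set \<Rightarrow> 'a set set \<Rightarrow> nat \<Rightarrow> nat \<Rightarrow> bool"
  where "bounded_intersections X F k l \<longleftrightarrow>
    finite X \<and> (\<forall>B\<in>F. B \<subseteq> X \<and> card B = k) \<and> (\<forall>B\<in>F. \<forall>B'\<in>F. B \<noteq> B' \<longrightarrow> card (B \<inter> B') \<le> l)"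

lemma cff_if_bounded_intersections:
  assumes F: "bounded_intersections X F k l" and "r * l + d < k"
  shows "cff r d X F (card X) (card F)"
  unfolding cff_def
proof (intro conjI ballI allI impI)
  show "finite X" "card X = card X" "card F = card F" using F by (auto simp: bounded_intersections_def)
  show "B \<subseteq> X" if "B \<in> F" for B using F that by (auto simp: bounded_intersections_def)
next
  fix B0 A assume B0: "B0 \<in> F" and A: "\<forall>j<r. A j \<in> F - {B0}"
  have "B0 \<subseteq> X" "finite X" and B0_card: "card B0 = k"
    using F B0 by (simp_all add: bounded_intersections_def)
  from \<open>B0 \<subseteq> X\<close> \<open>finite X\<close> have B0_fin: "finite B0" by (rule finite_subset)
  have "card (B0 \<inter> (\<Union>j<r. A j)) = card (\<Union>j<r. B0 \<inter> A j)" by (rule arg_cong[where f = card]) blast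
  also have "\<dots> \<le> (\<Sum>j<r. card (B0 \<inter> A j))" by (rule card_UN_le) simp
  also have "\<dots> \<le> (\<Sum>j<r. l)"
  proof (rule sum_mono)
    fix j assume "j \<in> {..<r}"
    then have "A j \<in> F" "A j \<noteq> B0" using A by auto
    then show "card (B0 \<inter> A j) \<le> l"
      using F B0 unfolding bounded_intersections_def by blast
  qed
  finally have "card (B0 \<inter> (\<Union>j<r. A j)) \<le> r * l" by simp
  moreover have "card (B0 - (\<Union>j<r. A j)) = card B0 - card (B0 \<inter> (\<Union>j<r. A j))"
    using B0_fin by (simp add: card_Diff_subset_Int)
  ultimately show "d < card (B0 - (\<Union>j<r. A j))"
    using B0_card \<open>r * l + d < k\<close> by linarith
qed

lemma bounded_intersections_image:
  assumes F: "bounded_intersections X F k l" and f: "inj_on f X"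
  shows "bounded_intersections (f ` X) ((`) f ` F) k l"
    and "card ((`) f ` F) = card F"
proof -
  have sub: "B \<subseteq> X" if "B \<in> F" for B using F that by (auto simp: bounded_intersections_def)
  have inj: "inj_on ((`) f) F"
    using inj_on_image_Pow[OF f] sub by (meson PowI inj_on_subset subsetI)
  show "card ((`) f ` F) = card F" using card_image[OF inj] .
  have "C \<subseteq> f ` X \<and> card C = k" if "C \<in> (`) f ` F" for C
    using that F sub f by (auto simp: bounded_intersections_def card_image inj_on_subset)
  moreover have "card (C \<inter> C') \<le> l"
    if C: "C \<in> (`) f ` F" and C': "C' \<in> (`) f ` F" and "C \<noteq> C'" for C C'
  proof -
    obtain B B' where B: "B \<in> F" "C = f ` B" and B': "B' \<in> F" "C' = f ` B'"
      using C C' by blast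
    with \<open>C \<noteq> C'\<close> have "B \<noteq> B'" by blast
    have "C \<inter> C' = f ` (B \<inter> B')"
      using B B' sub f by (simp add: inj_on_image_Int)
    moreover have "inj_on f (B \<inter> B')"
      using f sub[OF B(1)] by (meson inj_on_subset le_infI1)
    ultimately have "card (C \<inter> C') = card (B \<inter> B')" by (simp add: card_image)
    then show ?thesis
      using F B B' \<open>B \<noteq> B'\<close> by (simp add: bounded_intersections_def)
  qed
  ultimately show "bounded_intersections (f ` X) ((`) f ` F) k l"
    using F by (simp add: bounded_intersections_def)
qed

lemma bounded_intersections_nat:
  assumes "bounded_intersections X F k l"
  shows "\<exists>(X' :: nat set) F'. bounded_intersections X' F' k l \<and> card X' = card X \<and> card F' = card F"
proof -
  have "finite X" using assms by (simp add: bounded_intersections_def)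
  then obtain f where "bij_betw f X {0..<card X}"
    using ex_bij_betw_finite_nat by blast
  then have "inj_on f X" by (simp add: bij_betw_def)
  then show ?thesis
    using bounded_intersections_image[OF assms] card_image by blast
qed

lemma bounded_intersections_graphs:
  assumes "finite P" and "finite S" and range: "\<And>c. c \<in> C \<Longrightarrow> w c ` P \<subseteq> S"
    and agree: "\<And>c c'. c \<in> C \<Longrightarrow> c' \<in> C \<Longrightarrow> c \<noteq> c' \<Longrightarrow> card {i \<in> P. w c i = w c' i} \<le> l"
    and "l < card P"
  defines "graph c \<equiv> (\<lambda>i. (i, w c i)) ` P"
  shows "bounded_intersections (P \<times> S) (graph ` C) (card P) l"
    and "card (graph ` C) = card C"
proof -
  have card_graph: "card (graph c) = card P" for c
    unfolding graph_def by (rule card_image) (simp add: inj_on_def)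
  have graph_Int: "graph c \<inter> graph c' = (\<lambda>i. (i, w c i)) ` {i \<in> P. w c i = w c' i}" for c c'
    unfolding graph_def by auto
  have card_Int: "card (graph c \<inter> graph c') \<le> l" if "c \<in> C" "c' \<in> C" "c \<noteq> c'" for c c'
  proof -
    have "card (graph c \<inter> graph c') \<le> card {i \<in> P. w c i = w c' i}"
      unfolding graph_Int using \<open>finite P\<close> by (simp add: card_image_le)
    then show ?thesis using agree[OF that] by linarith
  qed
  have "inj_on graph C"
  proof (rule inj_onI, rule ccontr)
    fix c c' assume "c \<in> C" "c' \<in> C" "graph c = graph c'" "c \<noteq> c'"
    then show False using card_Int[of c c'] card_graph[of c] \<open>l < card P\<close> by simp
  qed
  then show "card (graph ` C) = card C" by (rule card_image)
  have "\<forall>G\<in>graph ` C. G \<subseteq> P \<times> S \<and> card G = card P"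
    using range card_graph by (auto simp: graph_def)
  moreover have "\<forall>G\<in>graph ` C. \<forall>G'\<in>graph ` C. G \<noteq> G' \<longrightarrow> card (G \<inter> G') \<le> l"
    using card_Int by blast
  ultimately show "bounded_intersections (P \<times> S) (graph ` C) (card P) l"
    unfolding bounded_intersections_def using assms(1,2) by simp
qed

lemma (in field) reed_solomon_bounded_intersections:
  assumes "finite (carrier R)" and "0 < t" and "t \<le> card (carrier R) + 1"
  shows "\<exists>X :: ('a option \<times> 'a) set. \<exists>F. bounded_intersections X F (card (carrier R) + 1) (t - 1)
    \<and> card X = (card (carrier R) + 1) * card (carrier R) \<and> card F = card (carrier R) ^ t"
proof -
  define C where "C = {cs. set cs \<subseteq> carrier R \<and> length cs = t}"
  define P where "P = insert None (Some ` carrier R)"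
  define F where "F = (\<lambda>cs. (\<lambda>i. (i, reed_solomon_word cs i)) ` P) ` C"
  have "finite P" unfolding P_def using assms(1) by simp
  have card_P: "card P = card (carrier R) + 1"
    unfolding P_def using assms(1) by (simp add: card_image)
  have range: "reed_solomon_word cs ` P \<subseteq> carrier R" if "cs \<in> C" for cs
    using that \<open>0 < t\<close> by (auto simp: C_def P_def reed_solomon_word_def eval_in_carrier
        intro!: subsetD[of "set _" "carrier R" "hd _"])
  have agree: "card {i \<in> P. reed_solomon_word cs i = reed_solomon_word ds i} \<le> t - 1"
    if "cs \<in> C" "ds \<in> C" "cs \<noteq> ds" for cs ds
    using card_reed_solomon_agree[of cs ds] that unfolding C_def P_def by auto
  have "t - 1 < card P" using assms(2,3) card_P by simp
  note graphs = bounded_intersections_graphs[of P "carrier R" C reed_solomon_word "t - 1",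
      OF \<open>finite P\<close> assms(1) range agree this, folded F_def]
  have "card C = card (carrier R) ^ t"
    unfolding C_def using card_lists_length_eq[OF assms(1)] by simp
  then show ?thesis
    using graphs card_P by (intro exI[of _ "P \<times> carrier R"] exI[of _ F]) (simp add: card_cartesian_product)
qed

lemma nat_floor_quotient_bound:
  fixes q d t :: nat
  assumes "d \<le> q" and "2 \<le> t"
  shows "nat \<lfloor>(real q - real d) / (real t - 1)\<rfloor> * (t - 1) + d \<le> q"
proof -
  define x where "x = (real q - real d) / (real t - 1)"
  have t: "real t - 1 > 0" "real (t - 1) = real t - 1" using assms(2) by auto
  have "x \<ge> 0" unfolding x_def using assms(1) t by simp
  then have "real (nat \<lfloor>x\<rfloor>) \<le> x" by simp
  then have "real (nat \<lfloor>x\<rfloor>) * (real t - 1) \<le> real q - real d"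
    unfolding x_def using t by (simp add: pos_le_divide_eq)
  then have "real (nat \<lfloor>x\<rfloor> * (t - 1) + d) \<le> real q" using t by simp
  then show ?thesis unfolding x_def by linarith
qed

theorem mainTheorem5:
  fixes q t d :: nat
  assumes "primepow q" and "2 \<le> t" and "t < q" and "d \<le> q"
  shows "\<exists>(X :: nat set) F. cff (nat \<lfloor>(real q - real d) / (real t - 1)\<rfloor>) d X F (q^2 + q) (q^t)"
proof -
  obtain p k where "Factorial_Ring.prime p" "k > 0" "q = p ^ k"
    using assms(1) unfolding primepow_def by auto
  then obtain GF :: "((int list \<times> nat) multiset \<Rightarrow> int) ring"
    where "field GF" and card_GF: "card (carrier GF) = q"
    using finite_field_exists by blast
  have "finite (carrier GF)" using card_GF assms(3) by (intro card_ge_0_finite) simp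
  moreover have "0 < t" "t \<le> card (carrier GF) + 1" using assms(2,3) card_GF by auto
  ultimately obtain X :: "nat set" and F where X: "bounded_intersections X F (q + 1) (t - 1)"
    and card_X: "card X = (q + 1) * q" and card_F: "card F = q ^ t"
    using field.reed_solomon_bounded_intersections[OF \<open>field GF\<close>] bounded_intersections_nat card_GF
    by metis
  have "nat \<lfloor>(real q - real d) / (real t - 1)\<rfloor> * (t - 1) + d < q + 1"
    using nat_floor_quotient_bound[OF assms(4,2)] by simp
  then have "cff (nat \<lfloor>(real q - real d) / (real t - 1)\<rfloor>) d X F (card X) (card F)"
    by (rule cff_if_bounded_intersections[OF X])
  moreover have "card X = q^2 + q" using card_X by (simp add: power2_eq_square)
  ultimately show ?thesis
    using card_F by auto
qed

end
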